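(* If $T'$ is a subtree of a subcubic tree $T$, then $\gamma_e(T')\le\gamma_e(T)$.
   Context: All graphs are finite, simple and undirected; subcubic means maximum degree at most $3$; a subtree is a connected subgraph (a tree) of $T$. For a graph $G$ and $D\subseteq V(G)$, and vertices $u,v$, let $\mathrm{dist}_{(G,D)}(u,v)$ be the minimum number of edges of a path $P$ in $G$ between $u$ and $v$ such that $D$ contains exactly one endvertex of $P$ and no internal vertex of $P$ ($\infty$ if no such path exists; in particular $\mathrm{dist}_{(G,D)}(u,u)=0$ for $u\in D$). Let $w_{(G,D)}(u)=\sum_{v\in D}\left(\frac12\right)^{\mathrm{dist}_{(G,D)}(u,v)-1}$ with $\left(\frac12\right)^\infty=0$. $D$ is an exponential dominating set if $w_{(G,D)}(u)\ge 1$ for every $u\in V(G)$, and $\gamma_e(G)$ is the minimum size of an exponential dominating set. *)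

theory Defs
  imports Complex_Main "HOL-Library.Extended_Nat"
begin

record 'a graph =
  verts :: "'a set"
  edges :: "('a \<times> 'a) set"

definition wf_graph :: "'a graph \<Rightarrow> bool" where
  "wf_graph G \<longleftrightarrow> finite (verts G) \<and> edges G \<subseteq> verts G \<times> verts G
     \<and> sym (edges G) \<and> irrefl (edges G)"

definition subcubic :: "'a graph \<Rightarrow> bool" where
  "subcubic G \<longleftrightarrow> (\<forall>v\<in>verts G. card {u. (v, u) \<in> edges G} \<le> 3)"

definition gpath :: "'a graph \<Rightarrow> 'a list \<Rightarrow> bool" where
  "gpath G xs \<longleftrightarrow> xs \<noteq> [] \<and> distinct xs \<and> set xs \<subseteq> verts G
     \<and> (\<forall>i. Suc i < length xs \<longrightarrow> (xs ! i, xs ! Suc i) \<in> edges G)"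

definition connected_graph :: "'a graph \<Rightarrow> bool" where
  "connected_graph G \<longleftrightarrow>
     (\<forall>u\<in>verts G. \<forall>v\<in>verts G. \<exists>xs. gpath G xs \<and> hd xs = u \<and> last xs = v)"

definition acyclic_graph :: "'a graph \<Rightarrow> bool" where
  "acyclic_graph G \<longleftrightarrow>
     \<not> (\<exists>xs. gpath G xs \<and> length xs \<ge> 3 \<and> (last xs, hd xs) \<in> edges G)"

definition is_tree :: "'a graph \<Rightarrow> bool" where
  "is_tree G \<longleftrightarrow> wf_graph G \<and> verts G \<noteq> {} \<and> connected_graph G \<and> acyclic_graph G"

definition subgraph :: "'a graph \<Rightarrow> 'a graph \<Rightarrow> bool" where
  "subgraph H G \<longleftrightarrow> wf_graph H \<and> verts H \<subseteq> verts G \<and> edges H \<subseteq> edges G"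

definition subtree :: "'a graph \<Rightarrow> 'a graph \<Rightarrow> bool" where
  "subtree H T \<longleftrightarrow> subgraph H T \<and> is_tree H"

definition dpath :: "'a graph \<Rightarrow> 'a set \<Rightarrow> 'a \<Rightarrow> 'a \<Rightarrow> 'a list \<Rightarrow> bool" where
  "dpath G D u v xs \<longleftrightarrow> gpath G xs \<and> hd xs = u \<and> last xs = v
     \<and> card ({hd xs, last xs} \<inter> D) = 1
     \<and> set (butlast (tl xs)) \<inter> D = {}"

definition ddist :: "'a graph \<Rightarrow> 'a set \<Rightarrow> 'a \<Rightarrow> 'a \<Rightarrow> enat" where
  "ddist G D u v = (INF xs \<in> {xs. dpath G D u v xs}. enat (length xs - 1))"

definition dweight :: "'a graph \<Rightarrow> 'a set \<Rightarrow> 'a \<Rightarrow> real" where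
  "dweight G D u = (\<Sum>v\<in>D. (case ddist G D u v of
       enat d \<Rightarrow> (1/2::real) powi (int d - 1)
     | \<infinity> \<Rightarrow> 0))"

definition exp_dominating :: "'a graph \<Rightarrow> 'a set \<Rightarrow> bool" where
  "exp_dominating G D \<longleftrightarrow> D \<subseteq> verts G \<and> (\<forall>u\<in>verts G. dweight G D u \<ge> 1)"

definition gamma_e :: "'a graph \<Rightarrow> nat" where
  "gamma_e G = Min (card ` {D. exp_dominating G D})"

end

theory Submission
  imports Defs
begin

text \<open>Induction on the number of vertices of \<open>T\<close> outside \<open>T'\<close>. A longest path entering \<open>T'\<close>
  from outside starts at a leaf \<open>x \<notin> T'\<close>, and \<open>T - x\<close> is again a subcubic tree containing
  \<open>T'\<close>; so it suffices that deleting a leaf \<open>x\<close> with neighbour \<open>y\<close> does not increase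
  \<open>\<gamma>\<^sub>e\<close>. Let \<open>D\<close> be exponential dominating in \<open>T\<close>. If \<open>x \<notin> D\<close>, or \<open>x, y \<in> D\<close> (then
  \<open>x\<close> contributes nothing to other vertices), \<open>D - {x}\<close> dominates \<open>T - x\<close>. If \<open>x \<in> D\<close> and
  \<open>y \<notin> D\<close>, replace \<open>x\<close> by \<open>y\<close>. For \<open>u\<close> at distance \<open>d\<close> from \<open>y\<close>, \<open>y\<close> now contributes
  \<open>2 \<cdot> 2\<^sup>-\<^sup>d\<close>, whereas \<open>x\<close> contributed \<open>2\<^sup>-\<^sup>d\<close>, and the vertices of \<open>D\<close> seen from \<open>u\<close> through
  \<open>y\<close> lie beyond the at most one remaining neighbour of \<open>y\<close>, so by a Kraft inequality in the
  subcubic tree they contributed at most \<open>2\<^sup>-\<^sup>d\<close> together.\<close>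

lemma gpath_iff_successively:
  "gpath G xs \<longleftrightarrow> xs \<noteq> [] \<and> distinct xs \<and> set xs \<subseteq> verts G
     \<and> successively (\<lambda>a b. (a, b) \<in> edges G) xs"
  unfolding gpath_def successively_conv_nth by auto

lemma gpath_append_iff:
  assumes "xs \<noteq> []" "ys \<noteq> []"
  shows "gpath G (xs @ ys) \<longleftrightarrow> gpath G xs \<and> gpath G ys \<and> set xs \<inter> set ys = {}
     \<and> (last xs, hd ys) \<in> edges G"
  using assms by (auto simp: gpath_iff_successively successively_append_iff)

lemma gpath_rev: "sym (edges G) \<Longrightarrow> gpath G (rev xs) \<longleftrightarrow> gpath G xs"
  unfolding gpath_iff_successively successively_rev
  by (auto simp: sym_def elim!: successively_mono)

lemma gpath_take: "gpath G xs \<Longrightarrow> 0 < n \<Longrightarrow> gpath G (take n xs)"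
  unfolding gpath_def by (auto dest: in_set_takeD)

lemma gpath_drop: "gpath G xs \<Longrightarrow> n < length xs \<Longrightarrow> gpath G (drop n xs)"
  unfolding gpath_def by (auto dest: in_set_dropD)

lemma gpath_subgraph: "subgraph H G \<Longrightarrow> gpath H xs \<Longrightarrow> gpath G xs"
  unfolding subgraph_def gpath_def by auto

lemma gpath_hd_eq_last:
  assumes "gpath G xs" "hd xs = last xs"
  shows "tl xs = []"
proof (cases xs)
  case (Cons a ys)
  then show ?thesis
    using assms by (cases ys rule: rev_cases) (auto simp: gpath_def)
qed simp

lemma gpath_length_ge_2: "gpath G xs \<Longrightarrow> hd xs \<noteq> last xs \<Longrightarrow> 2 \<le> length xs"
  unfolding gpath_def by (cases xs) (auto simp: Suc_le_eq)

lemma gpath_length_le_card: "gpath G xs \<Longrightarrow> finite (verts G) \<Longrightarrow> length xs \<le> card (verts G)"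
  unfolding gpath_def by (metis card_mono distinct_card)

lemma gpath_last_edge:
  assumes "gpath G xs" "2 \<le> length xs"
  shows "(xs ! (length xs - 2), last xs) \<in> edges G"
proof -
  have "Suc (length xs - 2) < length xs"
    using assms(2) by simp
  then have "(xs ! (length xs - 2), xs ! Suc (length xs - 2)) \<in> edges G"
    using assms(1) by (simp add: gpath_def)
  moreover have "Suc (length xs - 2) = length xs - 1" "xs \<noteq> []"
    using assms(2) by auto
  ultimately show ?thesis
    by (simp add: last_conv_nth)
qed

lemma set_butlast_tl: "set (butlast (tl xs)) = {xs ! j |j. 0 < j \<and> j < length xs - 1}"
proof (rule set_eqI, rule iffI)
  fix z assume "z \<in> set (butlast (tl xs))"
  then obtain j where j: "j < length (butlast (tl xs))" "butlast (tl xs) ! j = z"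
    by (auto simp: in_set_conv_nth)
  then have "z = xs ! Suc j"
    by (simp add: nth_butlast nth_tl)
  then show "z \<in> {xs ! j |j. 0 < j \<and> j < length xs - 1}"
    using j by force
next
  fix z assume "z \<in> {xs ! j |j. 0 < j \<and> j < length xs - 1}"
  then obtain j where j: "0 < j" "j < length xs - 1" "z = xs ! j"
    by blast
  then obtain k where k: "j = Suc k"
    by (cases j) auto
  then have "butlast (tl xs) ! k = z" "k < length (butlast (tl xs))"
    using j by (simp_all add: nth_butlast nth_tl)
  then show "z \<in> set (butlast (tl xs))"
    by (metis nth_mem)
qed

lemma set_butlast_tl_subset: "set (butlast (tl xs)) \<subseteq> set xs"
  by (cases xs) (auto dest: in_set_butlastD)

lemma set_butlast_tl_take: "set (butlast (tl (take n xs))) \<subseteq> set (butlast (tl xs))"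
  unfolding set_butlast_tl by force

lemma last_notin_butlast_tl:
  assumes "distinct xs"
  shows "last xs \<notin> set (butlast (tl xs))"
proof (cases xs rule: rev_cases)
  case (snoc ys a)
  then show ?thesis
    using assms by (cases ys) (auto simp: butlast_tl)
qed simp

lemma two_paths_not_acyclic:
  assumes sym: "sym (edges G)"
    and xs: "gpath G (a # p @ z # r)" and ys: "gpath G (a # q @ z # s)"
    and disj: "set p \<inter> set q = {}" and pq: "p \<noteq> [] \<or> q \<noteq> []"
  shows "\<not> acyclic_graph G"
proof -
  have "gpath G ((a # p) @ [z])"
    using gpath_take[OF xs, of "length p + 2"] by simp
  then have ap: "gpath G (a # p)" "(last (a # p), z) \<in> edges G"
    using gpath_append_iff[of "a # p" "[z]"] by simp_all
  have "gpath G ([a] @ q @ [z])"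
    using gpath_take[OF ys, of "length q + 2"] by simp
  then have aq: "gpath G (q @ [z])" "(a, hd (q @ [z])) \<in> edges G"
    using gpath_append_iff[of "[a]" "q @ [z]"] by simp_all
  define cyc where "cyc = (a # p) @ rev (q @ [z])"
  have "set (a # p) \<inter> set (rev (q @ [z])) = {}"
    using xs ys disj by (auto simp: gpath_def)
  moreover have "gpath G (rev (q @ [z]))"
    using aq(1) sym by (simp only: gpath_rev)
  ultimately have "gpath G cyc"
    unfolding cyc_def using ap gpath_append_iff[of "a # p" "rev (q @ [z])"] by simp
  moreover have "length cyc \<ge> 3"
    using pq by (auto simp: cyc_def Suc_le_eq)
  moreover have "last cyc = hd (q @ [z])" "hd cyc = a"
    unfolding cyc_def by (cases q, simp_all)
  ultimately show ?thesis
    using aq(2) sym unfolding acyclic_graph_def sym_def by metis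
qed

lemma diverging_paths_not_acyclic:
  assumes sym: "sym (edges G)" and xs: "gpath G (a # xs)" and ys: "gpath G (a # ys)"
    and ne: "xs \<noteq> []" "ys \<noteq> []" and hd: "hd xs \<noteq> hd ys" and last: "last xs = last ys"
  shows "\<not> acyclic_graph G"
proof -
  have "\<exists>z\<in>set xs. z \<in> set ys"
    using last ne by (metis last_in_set)
  then obtain p z r where xs': "xs = p @ z # r" and "z \<in> set ys"
    and p: "\<forall>w\<in>set p. w \<notin> set ys"
    using split_list_first_prop[of xs "\<lambda>w. w \<in> set ys"] by blast
  then obtain q s where ys': "ys = q @ z # s"
    by (metis split_list)
  have "p \<noteq> [] \<or> q \<noteq> []"
    using hd xs' ys' by auto
  moreover have "set p \<inter> set q = {}"
    using p ys' by auto
  ultimately show ?thesis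
    using two_paths_not_acyclic[OF sym] xs ys xs' ys' by simp
qed

lemma acyclic_gpath_unique:
  assumes sym: "sym (edges G)" and ac: "acyclic_graph G"
  shows "gpath G xs \<Longrightarrow> gpath G ys \<Longrightarrow> hd xs = hd ys \<Longrightarrow> last xs = last ys \<Longrightarrow> xs = ys"
proof (induction xs arbitrary: ys)
  case Nil
  then show ?case by (simp add: gpath_def)
next
  case (Cons a xs')
  obtain ys' where ys: "ys = a # ys'"
    using Cons.prems by (cases ys) (auto simp: gpath_def)
  consider "xs' = []" | "ys' = []" | "xs' \<noteq> []" "ys' \<noteq> []"
    by blast
  then show ?case
  proof cases
    case 1
    then show ?thesis
      using Cons.prems gpath_hd_eq_last[of G ys] ys by auto
  next
    case 2
    then show ?thesis
      using Cons.prems gpath_hd_eq_last[of G "a # xs'"] ys by auto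
  next
    case 3
    have gx': "gpath G xs'"
      using Cons.prems(1) 3 gpath_append_iff[of "[a]" xs'] by simp
    have gy': "gpath G ys'"
      using Cons.prems(2) 3 gpath_append_iff[of "[a]" ys'] ys by simp
    show ?thesis
    proof (cases "hd xs' = hd ys'")
      case True
      then show ?thesis
        using Cons.IH[OF gx' gy'] Cons.prems(4) 3 ys by simp
    next
      case False
      then show ?thesis
        using diverging_paths_not_acyclic[OF sym] Cons.prems(1,2,4) 3 ys ac by auto
    qed
  qed
qed

definition delete_vertex :: "'a graph \<Rightarrow> 'a \<Rightarrow> 'a graph" where
  "delete_vertex G x =
     \<lparr>verts = verts G - {x}, edges = {(a, b). (a, b) \<in> edges G \<and> a \<noteq> x \<and> b \<noteq> x}\<rparr>"

lemma delete_vertex_simps [simp]: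
  "verts (delete_vertex G x) = verts G - {x}"
  "edges (delete_vertex G x) = {(a, b). (a, b) \<in> edges G \<and> a \<noteq> x \<and> b \<noteq> x}"
  by (simp_all add: delete_vertex_def)

lemma gpath_delete_vertex: "gpath (delete_vertex G x) xs \<longleftrightarrow> gpath G xs \<and> x \<notin> set xs"
proof -
  have "xs ! i \<noteq> x \<and> xs ! Suc i \<noteq> x" if "x \<notin> set xs" "Suc i < length xs" for i
    using that by (metis Suc_lessD nth_mem)
  then show ?thesis
    unfolding gpath_def by auto
qed

lemma wf_graph_delete_vertex: "wf_graph G \<Longrightarrow> wf_graph (delete_vertex G x)"
  unfolding wf_graph_def by (auto simp: sym_def irrefl_def)

lemma finite_neighbours: "wf_graph G \<Longrightarrow> finite {u. (v, u) \<in> edges G}"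
  unfolding wf_graph_def by (auto intro: finite_subset[of _ "verts G"])

lemma subcubic_delete_vertex:
  assumes "wf_graph G" "subcubic G"
  shows "subcubic (delete_vertex G x)"
  unfolding subcubic_def
proof
  fix v assume v: "v \<in> verts (delete_vertex G x)"
  have "card {u. (v, u) \<in> edges (delete_vertex G x)} \<le> card {u. (v, u) \<in> edges G}"
    using finite_neighbours[OF assms(1)] by (intro card_mono) auto
  then show "card {u. (v, u) \<in> edges (delete_vertex G x)} \<le> 3"
    using assms(2) v by (force simp: subcubic_def)
qed

lemma subtree_delete_vertex: "subtree H G \<Longrightarrow> x \<notin> verts H \<Longrightarrow> subtree H (delete_vertex G x)"
  unfolding subtree_def subgraph_def wf_graph_def by auto

lemma leaf_notin_gpath:
  assumes sym: "sym (edges G)" and leaf: "\<And>w. (x, w) \<in> edges G \<longleftrightarrow> w = y"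
    and g: "gpath G xs" and "hd xs \<noteq> x" "last xs \<noteq> x"
  shows "x \<notin> set xs"
proof
  assume "x \<in> set xs"
  then obtain i where i: "i < length xs" "xs ! i = x"
    by (auto simp: in_set_conv_nth)
  moreover have "xs \<noteq> []"
    using g by (simp add: gpath_def)
  ultimately have "i \<noteq> 0" "i \<noteq> length xs - 1"
    using assms(4,5) by (metis hd_conv_nth, metis last_conv_nth)
  then obtain j where j: "i = Suc j" "Suc i < length xs"
    using i(1) by (cases i) auto
  have "(xs ! j, x) \<in> edges G" "(x, xs ! Suc i) \<in> edges G"
    using g i j by (auto simp: gpath_def)
  then have "xs ! j = xs ! Suc i"
    using sym leaf by (auto simp: sym_def)
  then show False
    using g j by (simp add: gpath_def nth_eq_iff_index_eq)
qed

lemma is_tree_delete_leaf: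
  assumes tree: "is_tree G" and leaf: "\<And>w. (x, w) \<in> edges G \<longleftrightarrow> w = y"
  shows "is_tree (delete_vertex G x)"
proof -
  have wf: "wf_graph G" and sym: "sym (edges G)"
    using tree by (auto simp: is_tree_def wf_graph_def)
  have "y \<in> verts G" "y \<noteq> x"
    using leaf[of y] wf by (auto simp: wf_graph_def irrefl_def)
  then have "verts (delete_vertex G x) \<noteq> {}"
    by auto
  moreover have "connected_graph (delete_vertex G x)"
    unfolding connected_graph_def
  proof (intro ballI)
    fix u v assume "u \<in> verts (delete_vertex G x)" "v \<in> verts (delete_vertex G x)"
    then obtain xs where "gpath G xs" "hd xs = u" "last xs = v" "u \<noteq> x" "v \<noteq> x"
      using tree by (auto simp: is_tree_def connected_graph_def)
    then show "\<exists>xs. gpath (delete_vertex G x) xs \<and> hd xs = u \<and> last xs = v"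
      using leaf_notin_gpath[OF sym leaf] by (auto simp: gpath_delete_vertex)
  qed
  moreover have "acyclic_graph (delete_vertex G x)"
    using tree by (auto simp: is_tree_def acyclic_graph_def gpath_delete_vertex)
  ultimately show ?thesis
    using wf_graph_delete_vertex[OF wf] by (simp add: is_tree_def)
qed

lemma subtree_spanning_eq:
  assumes tree: "is_tree T" and sub: "subtree T' T" and spanning: "verts T \<subseteq> verts T'"
  shows "T' = T"
proof -
  have sym: "sym (edges T)" and ac: "acyclic_graph T"
    using tree by (auto simp: is_tree_def wf_graph_def)
  have V: "verts T' = verts T"
    using sub spanning by (auto simp: subtree_def subgraph_def)
  have "edges T \<subseteq> edges T'"
  proof
    fix e assume e: "e \<in> edges T"
    then obtain a b where ab: "e = (a, b)" "a \<in> verts T" "b \<in> verts T" "a \<noteq> b"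
      using tree by (cases e) (auto simp: is_tree_def wf_graph_def irrefl_def)
    moreover have "connected_graph T'"
      using sub by (simp add: subtree_def is_tree_def)
    ultimately obtain zs where zs: "gpath T' zs" "hd zs = a" "last zs = b"
      using V unfolding connected_graph_def by blast
    have "gpath T [a, b]"
      using e ab by (auto simp: gpath_def nth_Cons split: nat.splits)
    moreover have "gpath T zs"
      using gpath_subgraph sub zs(1) by (auto simp: subtree_def)
    ultimately have "zs = [a, b]"
      using acyclic_gpath_unique[OF sym ac] zs by simp
    then show "e \<in> edges T'"
      using zs ab by (auto simp: gpath_def)
  qed
  moreover have "edges T' \<subseteq> edges T"
    using sub by (simp add: subtree_def subgraph_def)
  ultimately show ?thesis
    using V by (cases T, cases T') simp
qed

lemma acyclic_gpath_no_chord: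
  assumes wf: "wf_graph G" and ac: "acyclic_graph G" and g: "gpath G xs"
    and j: "j < length xs" "(hd xs, xs ! j) \<in> edges G"
  shows "j = 1"
proof (rule ccontr)
  have sym: "sym (edges G)"
    using wf by (simp add: wf_graph_def)
  assume "j \<noteq> 1"
  moreover have "j \<noteq> 0"
  proof
    assume "j = 0"
    then have "(hd xs, hd xs) \<in> edges G"
      using g j by (cases xs) (auto simp: gpath_def)
    then show False
      using wf by (simp add: wf_graph_def irrefl_def)
  qed
  ultimately have "2 \<le> j"
    by simp
  define cyc where "cyc = take (Suc j) xs"
  have "gpath G cyc" "hd cyc = hd xs"
    using gpath_take[OF g] by (simp_all add: cyc_def)
  moreover have "length cyc \<ge> 3" "last cyc = xs ! j"
    using j(1) \<open>2 \<le> j\<close> by (simp_all add: cyc_def take_Suc_conv_app_nth)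
  ultimately show False
    using ac j(2) sym unfolding acyclic_graph_def sym_def by metis
qed

lemma longest_entering_path_starts_at_leaf:
  assumes tree: "is_tree T" and sub: "subtree T' T"
    and xs: "gpath T xs" "hd xs \<notin> verts T'" "last xs \<in> verts T'"
    and longest: "\<And>ys. gpath T ys \<Longrightarrow> hd ys \<notin> verts T' \<Longrightarrow> last ys \<in> verts T'
      \<Longrightarrow> length ys \<le> length xs"
    and w: "(hd xs, w) \<in> edges T"
  shows "w = xs ! 1"
proof (rule ccontr)
  assume w1: "w \<noteq> xs ! 1"
  have wf: "wf_graph T" and sym: "sym (edges T)" and ac: "acyclic_graph T"
    using tree by (auto simp: is_tree_def wf_graph_def)
  have wv: "w \<in> verts T"
    using w wf by (auto simp: wf_graph_def)
  show False
  proof (cases "w \<in> set xs")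
    case True
    then obtain j where "j < length xs" "xs ! j = w"
      by (auto simp: in_set_conv_nth)
    then show False
      using acyclic_gpath_no_chord[OF wf ac xs(1)] w w1 by blast
  next
    case False
    moreover have "gpath T [w]" "(w, hd xs) \<in> edges T" "xs \<noteq> []"
      using wv w sym xs(1) by (auto simp: gpath_def sym_def)
    ultimately have gw: "gpath T (w # xs)"
      using gpath_append_iff[of "[w]" xs] xs(1) by simp
    show False
    proof (cases "w \<in> verts T'")
      case False
      then show False
        using longest[OF gw] xs(1,3) by (simp add: gpath_def)
    next
      case True
      then obtain zs where zs: "gpath T' zs" "hd zs = w" "last zs = last xs"
        using sub xs(3) by (auto simp: subtree_def is_tree_def connected_graph_def)
      have "gpath T zs"
        using gpath_subgraph sub zs(1) by (auto simp: subtree_def)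
      then have "zs = w # xs"
        using acyclic_gpath_unique[OF sym ac _ gw] zs xs(1) by (auto simp: gpath_def)
      then have "hd xs \<in> verts T'"
        using zs(1) xs(1) by (cases xs) (auto simp: gpath_def)
      then show False
        using xs(2) by simp
    qed
  qed
qed

lemma exists_leaf_outside_subtree:
  assumes tree: "is_tree T" and sub: "subtree T' T" and "\<not> verts T \<subseteq> verts T'"
  obtains x y where "x \<in> verts T - verts T'" "\<And>w. (x, w) \<in> edges T \<longleftrightarrow> w = y"
proof -
  let ?entering = "\<lambda>xs. gpath T xs \<and> hd xs \<notin> verts T' \<and> last xs \<in> verts T'"
  have fin: "finite (verts T)"
    using tree by (simp add: is_tree_def wf_graph_def)
  obtain z v where z: "z \<in> verts T" "z \<notin> verts T'" and v: "v \<in> verts T'" "v \<in> verts T"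
    using assms(3) sub by (auto simp: subtree_def subgraph_def is_tree_def)
  moreover have "connected_graph T"
    using tree by (simp add: is_tree_def)
  ultimately obtain zs where "gpath T zs" "hd zs = z" "last zs = v"
    unfolding connected_graph_def by blast
  then have "?entering zs"
    using z v by simp
  moreover have "\<forall>ys. ?entering ys \<longrightarrow> length ys < card (verts T) + 1"
    using gpath_length_le_card[OF _ fin] by (simp add: less_Suc_eq_le)
  ultimately obtain xs where xs: "?entering xs"
    and longest: "\<And>ys. ?entering ys \<Longrightarrow> length ys \<le> length xs"
    using ex_has_greatest_nat[of ?entering zs length] by blast
  have "2 \<le> length xs"
    using xs gpath_length_ge_2 by fastforce
  then have "(hd xs, xs ! 1) \<in> edges T" "hd xs \<in> verts T"
    using xs by (auto simp: gpath_def hd_conv_nth)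
  then show ?thesis
    using that longest_entering_path_starts_at_leaf[OF tree sub _ _ _ longest] xs by blast
qed

definition dcontrib :: "'a graph \<Rightarrow> 'a set \<Rightarrow> 'a \<Rightarrow> 'a \<Rightarrow> real" where
  "dcontrib G D u v =
     (case ddist G D u v of enat d \<Rightarrow> (1/2::real) powi (int d - 1) | \<infinity> \<Rightarrow> 0)"

lemma dweight_eq_sum_dcontrib: "dweight G D u = (\<Sum>v\<in>D. dcontrib G D u v)"
  unfolding dweight_def dcontrib_def by simp

lemma dcontrib_nonneg: "0 \<le> dcontrib G D u v"
  unfolding dcontrib_def by (cases "ddist G D u v") auto

lemma dcontrib_cong:
  assumes "\<And>xs. dpath G' D' u v xs \<longleftrightarrow> dpath G D u v xs"
  shows "dcontrib G' D' u v = dcontrib G D u v"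
proof -
  have "{xs. dpath G' D' u v xs} = {xs. dpath G D u v xs}"
    using assms by simp
  then show ?thesis
    unfolding dcontrib_def ddist_def by simp
qed

lemma dcontrib_eq_0:
  assumes "\<nexists>xs. dpath G D u v xs"
  shows "dcontrib G D u v = 0"
proof -
  have "{xs. dpath G D u v xs} = {}"
    using assms by simp
  then have "ddist G D u v = \<infinity>"
    unfolding ddist_def by (simp only:) (simp add: top_enat_def)
  then show ?thesis
    unfolding dcontrib_def by simp
qed

lemma ddist_dpath:
  assumes "sym (edges G)" "acyclic_graph G" "dpath G D u v xs"
  shows "ddist G D u v = enat (length xs - 1)"
proof -
  have "ys = xs" if "dpath G D u v ys" for ys
    using that assms(3) acyclic_gpath_unique[OF assms(1,2), of ys xs] by (simp add: dpath_def)
  then have "{ys. dpath G D u v ys} = {xs}"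
    using assms(3) by blast
  then show ?thesis
    unfolding ddist_def by simp
qed

lemma dcontrib_dpath:
  assumes "sym (edges G)" "acyclic_graph G" "dpath G D u v xs" "2 \<le> length xs"
  shows "dcontrib G D u v = (1/2) ^ (length xs - 2)"
proof -
  have "int (length xs - 1) - 1 = int (length xs - 2)"
    using assms(4) by simp
  then have "(1/2::real) powi (int (length xs - 1) - 1) = (1/2) ^ (length xs - 2)"
    by (simp only: power_int_of_nat)
  then show ?thesis
    unfolding dcontrib_def ddist_dpath[OF assms(1-3)] by (simp only: enat.case)
qed

lemma dcontrib_self:
  assumes "u \<in> D" "u \<in> verts G"
  shows "dcontrib G D u u = 2"
proof -
  have "dpath G D u u [u]"
    using assms by (simp add: dpath_def gpath_def)
  then have "ddist G D u u \<le> enat 0"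
    unfolding ddist_def by (intro INF_lower2[of "[u]"]) auto
  then have "ddist G D u u = enat 0"
    by (simp add: zero_enat_def[symmetric])
  then show ?thesis
    unfolding dcontrib_def by (simp add: zero_enat_def power_int_minus)
qed

lemma dweight_ge_2:
  assumes "finite D" "u \<in> D" "u \<in> verts G"
  shows "2 \<le> dweight G D u"
  using member_le_sum[of u D "dcontrib G D u", OF assms(2) dcontrib_nonneg assms(1)]
  by (simp add: dweight_eq_sum_dcontrib dcontrib_self[OF assms(2,3)])

lemma exp_dominating_verts: "finite (verts G) \<Longrightarrow> exp_dominating G (verts G)"
  unfolding exp_dominating_def using dweight_ge_2 by fastforce

lemma finite_exp_dominating: "finite (verts G) \<Longrightarrow> exp_dominating G D \<Longrightarrow> finite D"
  unfolding exp_dominating_def using finite_subset by blast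

lemma finite_card_exp_dominating: "finite (verts G) \<Longrightarrow> finite (card ` {D. exp_dominating G D})"
  by (rule finite_surj[of "Pow (verts G)" _ card]) (auto simp: exp_dominating_def)

lemma gamma_e_le_card:
  "finite (verts G) \<Longrightarrow> exp_dominating G D \<Longrightarrow> gamma_e G \<le> card D"
  unfolding gamma_e_def by (simp add: finite_card_exp_dominating)

lemma obtain_min_exp_dominating:
  assumes "finite (verts G)"
  obtains D where "exp_dominating G D" "card D = gamma_e G"
proof -
  have "card ` {D. exp_dominating G D} \<noteq> {}"
    using exp_dominating_verts[OF assms] by blast
  then show ?thesis
    using Min_in[OF finite_card_exp_dominating[OF assms]] that unfolding gamma_e_def by auto
qed

lemma sum_inj_into_Union_le_card:
  fixes g :: "'b \<Rightarrow> real"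
  assumes inj: "inj_on f A" and into: "\<And>a. a \<in> A \<Longrightarrow> \<exists>c\<in>C. f a \<in> B c"
    and fin: "finite C" "\<And>c. c \<in> C \<Longrightarrow> finite (B c)"
    and disj: "\<And>c c'. c \<in> C \<Longrightarrow> c' \<in> C \<Longrightarrow> c \<noteq> c' \<Longrightarrow> B c \<inter> B c' = {}"
    and nonneg: "\<And>x. 0 \<le> g x" and le1: "\<And>c. c \<in> C \<Longrightarrow> sum g (B c) \<le> 1"
  shows "(\<Sum>a\<in>A. g (f a)) \<le> card C"
proof -
  have "(\<Sum>a\<in>A. g (f a)) = sum g (f ` A)"
    by (simp add: sum.reindex[OF inj] comp_def)
  also have "\<dots> \<le> sum g (\<Union>c\<in>C. B c)"
    using into fin nonneg by (intro sum_mono2) auto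
  also have "\<dots> = (\<Sum>c\<in>C. sum g (B c))"
    using fin disj by (intro sum.UNION_disjoint) auto
  also have "\<dots> \<le> (\<Sum>c\<in>C. 1)"
    using le1 by (rule sum_mono)
  finally show ?thesis
    by simp
qed

lemma card_neighbours_Diff_le:
  assumes "wf_graph G" "subcubic G" "v \<in> verts G" "F \<subseteq> {u. (v, u) \<in> edges G}"
  shows "card ({u. (v, u) \<in> edges G} - F) + card F \<le> 3"
proof -
  have "card ({u. (v, u) \<in> edges G} - F) + card F = card {u. (v, u) \<in> edges G}"
    using finite_neighbours[OF assms(1)] assms(4)
    by (metis card_Diff_subset card_mono finite_subset le_add_diff_inverse2)
  then show ?thesis
    using assms(2,3) by (simp add: subcubic_def)
qed

definition dbranches :: "'a graph \<Rightarrow> 'a set \<Rightarrow> nat \<Rightarrow> 'a \<Rightarrow> 'a \<Rightarrow> 'a list set" where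
  "dbranches G D k p b = {R. gpath G R \<and> 2 \<le> length R \<and> length R \<le> k \<and> hd R = p \<and> R ! 1 = b
     \<and> last R \<in> D \<and> set (butlast (tl R)) \<inter> D = {}}"

definition branch_weight :: "'a list \<Rightarrow> real" where
  "branch_weight R = (1/2) ^ (length R - 2)"

lemma finite_dbranches:
  assumes "finite (verts G)"
  shows "finite (dbranches G D k p b)"
proof -
  have "dbranches G D k p b \<subseteq> {R. set R \<subseteq> verts G \<and> length R \<le> k}"
    unfolding dbranches_def gpath_def by auto
  then show ?thesis
    using finite_lists_length_le[OF assms] finite_subset by blast
qed

lemma dbranches_disjoint: "c \<noteq> c' \<Longrightarrow> dbranches G D k b c \<inter> dbranches G D k b c' = {}"
  by (auto simp: dbranches_def)

lemma dbranches_stop: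
  assumes "b \<in> D"
  shows "dbranches G D k p b \<subseteq> {[p, b]}"
proof
  fix R assume R: "R \<in> dbranches G D k p b"
  have "length R = 2"
  proof (rule ccontr)
    assume "length R \<noteq> 2"
    then have "R ! 1 \<in> set (butlast (tl R))"
      using R unfolding set_butlast_tl dbranches_def by force
    then show False
      using R assms by (auto simp: dbranches_def)
  qed
  then have "R = [R ! 0, R ! 1]"
    by (simp add: list_eq_iff_nth_eq nth_Cons split: nat.split)
  moreover have "R ! 0 = p" "R ! 1 = b"
    using R \<open>length R = 2\<close> by (cases R, auto simp: dbranches_def)
  ultimately show "R \<in> {[p, b]}"
    by simp
qed

lemma tl_mem_dbranches:
  assumes R: "R \<in> dbranches G D (Suc k) p b" and b: "b \<notin> D"
  shows "3 \<le> length R" "tl R \<in> dbranches G D k b (R ! 2)"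
    "R ! 2 \<in> {c. (b, c) \<in> edges G} - {p}"
proof -
  have g: "gpath G R" and l2: "2 \<le> length R" and lk: "length R \<le> Suc k" and h: "hd R = p"
    and r1: "R ! 1 = b" and lD: "last R \<in> D" and int: "set (butlast (tl R)) \<inter> D = {}"
    using R by (auto simp: dbranches_def)
  show l3: "3 \<le> length R"
  proof (rule ccontr)
    assume "\<not> 3 \<le> length R"
    then have "length R = 2" "R \<noteq> []"
      using l2 by auto
    then have "last R = R ! 1"
      by (simp add: last_conv_nth)
    then show False
      using lD r1 b by simp
  qed
  have "tl R \<noteq> []"
    using l3 by (cases R) auto
  then have "hd (tl R) = b" "tl R ! 1 = R ! 2" "last (tl R) = last R"
    using l3 r1 by (simp_all add: hd_conv_nth nth_tl numeral_2_eq_2 last_tl)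
  moreover have "set (butlast (tl (tl R))) \<subseteq> set (butlast (tl R))"
    unfolding butlast_tl by (cases "tl (butlast R)") auto
  moreover have "gpath G (tl R)"
    using gpath_drop[OF g, of 1] l3 by (simp add: drop_Suc)
  ultimately show "tl R \<in> dbranches G D k b (R ! 2)"
    unfolding dbranches_def using l3 lk lD int by auto
  have "(R ! 1, R ! 2) \<in> edges G" "R ! 2 \<noteq> R ! 0" "R ! 0 = p"
    using g l3 h by (auto simp: gpath_def nth_eq_iff_index_eq numeral_2_eq_2 hd_conv_nth)
  then show "R ! 2 \<in> {c. (b, c) \<in> edges G} - {p}"
    using r1 by simp
qed

lemma dpath_last_in: "dpath G D u v Q \<Longrightarrow> u \<notin> D \<Longrightarrow> v \<in> D"
  unfolding dpath_def by (cases "v \<in> D") auto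

lemma drop_dpath_mem_dbranches:
  assumes Q: "dpath G D u v Q" and u: "u \<notin> D" and i: "0 < i" "i < length Q - 1"
    and K: "length Q \<le> K"
  shows "drop i Q \<in> dbranches G D K (Q ! i) (Q ! Suc i)"
proof -
  have g: "gpath G Q" and "last Q \<in> D" and int: "set (butlast (tl Q)) \<inter> D = {}"
    using Q dpath_last_in[OF Q u] by (auto simp: dpath_def)
  moreover have "set (butlast (tl (drop i Q))) \<subseteq> set (butlast (tl Q))"
    unfolding set_butlast_tl using i by force
  moreover have "gpath G (drop i Q)"
    using gpath_drop[OF g] i by simp
  ultimately show ?thesis
    unfolding dbranches_def using i K by (auto simp: hd_drop_conv_nth)
qed

lemma inj_on_tl_dbranches: "inj_on tl (dbranches G D k p b)"
proof (rule inj_onI)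
  fix R S assume "R \<in> dbranches G D k p b" "S \<in> dbranches G D k p b" "tl R = tl S"
  then have "R \<noteq> []" "S \<noteq> []" "hd R = hd S" "tl R = tl S"
    by (auto simp: dbranches_def)
  then show "R = S"
    by (metis list.collapse)
qed

lemma dbranches_kraft_step:
  assumes wf: "wf_graph G" and sc: "subcubic G" and bp: "(b, p) \<in> edges G" and b: "b \<notin> D"
    and IH: "\<And>c. (c, b) \<in> edges G \<Longrightarrow> (\<Sum>R\<in>dbranches G D k b c. branch_weight R) \<le> 1"
  shows "(\<Sum>R\<in>dbranches G D (Suc k) p b. branch_weight R) \<le> 1"
proof -
  let ?Q = "dbranches G D (Suc k) p b"
  define N where "N = {c. (b, c) \<in> edges G} - {p}"
  have fin: "finite (verts G)" and sym: "sym (edges G)" and "b \<in> verts G"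
    using wf bp by (auto simp: wf_graph_def)
  then have "card N \<le> 2"
    using card_neighbours_Diff_le[OF wf sc, of b "{p}"] bp by (simp add: N_def sym_def)
  have "(\<Sum>R\<in>?Q. branch_weight (tl R)) \<le> card N"
  proof (rule sum_inj_into_Union_le_card[OF inj_on_tl_dbranches, where g = branch_weight
      and B = "dbranches G D k b"])
    show "\<exists>c\<in>N. tl R \<in> dbranches G D k b c" if "R \<in> ?Q" for R
      using tl_mem_dbranches[OF that b] by (auto simp: N_def)
    show "(\<Sum>S\<in>dbranches G D k b c. branch_weight S) \<le> 1" if "c \<in> N" for c
      using IH that sym by (simp add: N_def sym_def)
  qed (simp_all add: N_def finite_neighbours[OF wf] finite_dbranches[OF fin] dbranches_disjoint
      branch_weight_def)
  moreover have "branch_weight R = branch_weight (tl R) / 2" if "R \<in> ?Q" for R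
  proof -
    have "length R - 2 = Suc (length (tl R) - 2)"
      using tl_mem_dbranches(1)[OF that b] by simp
    then show ?thesis
      by (simp add: branch_weight_def)
  qed
  then have "(\<Sum>R\<in>?Q. branch_weight R) = (\<Sum>R\<in>?Q. branch_weight (tl R)) / 2"
    unfolding sum_divide_distrib by (rule sum.cong[OF refl])
  ultimately show ?thesis
    using \<open>card N \<le> 2\<close> by linarith
qed

text \<open>A Kraft inequality: beyond \<open>b\<close> every vertex offers at most two ways on, so the
  branches ending at their first vertex of \<open>D\<close> behave like a prefix-free binary code.\<close>

lemma dbranches_kraft:
  assumes wf: "wf_graph G" and sc: "subcubic G"
  shows "(b, p) \<in> edges G \<Longrightarrow> (\<Sum>R\<in>dbranches G D k p b. branch_weight R) \<le> 1"
proof (induction k arbitrary: p b)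
  case 0
  have "dbranches G D 0 p b = {}"
    by (auto simp: dbranches_def)
  then show ?case
    by simp
next
  case (Suc k)
  show ?case
  proof (cases "b \<in> D")
    case True
    then have "(\<Sum>R\<in>dbranches G D (Suc k) p b. branch_weight R) \<le> (\<Sum>R\<in>{[p, b]}. branch_weight R)"
      by (intro sum_mono2 dbranches_stop) (auto simp: branch_weight_def)
    then show ?thesis
      by (simp add: branch_weight_def)
  next
    case False
    then show ?thesis
      by (rule dbranches_kraft_step[OF wf sc Suc.prems]) (rule Suc.IH)
  qed
qed

locale subcubic_tree_leaf =
  fixes T :: "'a graph" and x y :: 'a
  assumes tree: "is_tree T" and subcubic: "subcubic T"
    and leaf: "\<And>w. (x, w) \<in> edges T \<longleftrightarrow> w = y"
begin

abbreviation Tx :: "'a graph" where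
  "Tx \<equiv> delete_vertex T x"

lemma wf: "wf_graph T" and sym: "sym (edges T)" and acyclic: "acyclic_graph T"
  and finite_verts: "finite (verts T)"
  using tree by (auto simp: is_tree_def wf_graph_def)

lemma tree_Tx: "is_tree Tx"
  using is_tree_delete_leaf[OF tree leaf] .

lemma sym_Tx: "sym (edges Tx)" and acyclic_Tx: "acyclic_graph Tx"
  using tree_Tx by (auto simp: is_tree_def wf_graph_def)

lemma leaf_edge: "(x, y) \<in> edges T" "(y, x) \<in> edges T" "y \<in> verts T" "y \<noteq> x"
  using leaf[of y] sym wf by (auto simp: sym_def wf_graph_def irrefl_def)

lemma x_notin_gpath: "gpath T Q \<Longrightarrow> hd Q \<noteq> x \<Longrightarrow> last Q \<noteq> x \<Longrightarrow> x \<notin> set Q"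
  using leaf_notin_gpath[OF sym leaf] by blast

lemma gpath_to_leaf:
  assumes "gpath T R" "last R = x" "hd R \<noteq> x"
  shows "2 \<le> length R" "R ! (length R - 2) = y"
proof -
  show l2: "2 \<le> length R"
    using gpath_length_ge_2[OF assms(1)] assms(2,3) by simp
  have "(R ! (length R - 2), x) \<in> edges T"
    using gpath_last_edge[OF assms(1) l2] assms(2) by simp
  then show "R ! (length R - 2) = y"
    using leaf sym by (auto simp: sym_def)
qed

lemma dpath_delete_leaf_iff:
  assumes "u \<noteq> x" "v \<noteq> x"
  shows "dpath Tx (D - {x}) u v Q \<longleftrightarrow> dpath T D u v Q"
proof (cases "gpath T Q \<and> hd Q = u \<and> last Q = v")
  case True
  then have "x \<notin> set Q"
    using x_notin_gpath assms by blast
  moreover have "{hd Q, last Q} \<inter> (D - {x}) = {hd Q, last Q} \<inter> D"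
    using True assms by auto
  moreover have "set (butlast (tl Q)) \<inter> (D - {x}) = set (butlast (tl Q)) \<inter> D"
    using calculation(1) set_butlast_tl_subset by fastforce
  ultimately show ?thesis
    using True by (simp add: dpath_def gpath_delete_vertex)
next
  case False
  then show ?thesis
    by (auto simp: dpath_def gpath_delete_vertex)
qed

lemma dcontrib_to_leaf_eq_0:
  assumes "x \<in> D" "y \<in> D" "u \<noteq> x"
  shows "dcontrib T D u x = 0"
proof (rule dcontrib_eq_0, rule notI)
  assume "\<exists>R. dpath T D u x R"
  then obtain R where R: "gpath T R" "hd R = u" "last R = x"
    "card ({hd R, last R} \<inter> D) = 1" "set (butlast (tl R)) \<inter> D = {}"
    by (auto simp: dpath_def)
  have l2: "2 \<le> length R" and ry: "R ! (length R - 2) = y"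
    using gpath_to_leaf R assms(3) by auto
  show False
  proof (cases "length R = 2")
    case True
    then have "hd R = y"
      using ry by (cases R) auto
    then show False
      using R(3,4) assms(1,2) leaf_edge(4) by simp
  next
    case False
    then have "y \<in> set (butlast (tl R))"
      unfolding set_butlast_tl using l2 ry by (auto intro!: exI[of _ "length R - 2"])
    then show False
      using R(5) assms(2) by blast
  qed
qed

lemma exp_dominating_delete_leaf:
  assumes D: "exp_dominating T D" and xy: "x \<in> D \<Longrightarrow> y \<in> D"
  shows "exp_dominating Tx (D - {x})"
proof -
  have finD: "finite D"
    using finite_exp_dominating[OF finite_verts D] .
  have "1 \<le> dweight Tx (D - {x}) u" if "u \<in> verts T" "u \<noteq> x" for u
  proof -
    have "1 \<le> dweight T D u"
      using D that by (simp add: exp_dominating_def)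
    also have "\<dots> = (\<Sum>v\<in>D - {x}. dcontrib T D u v)"
      unfolding dweight_eq_sum_dcontrib using finD xy dcontrib_to_leaf_eq_0 that(2)
      by (intro sum.mono_neutral_right) auto
    also have "\<dots> = dweight Tx (D - {x}) u"
      unfolding dweight_eq_sum_dcontrib
      using dcontrib_cong[OF dpath_delete_leaf_iff] that(2) by simp
    finally show ?thesis .
  qed
  then show ?thesis
    using D by (auto simp: exp_dominating_def)
qed

end

locale leaf_swap = subcubic_tree_leaf +
  fixes D :: "'a set" and u :: 'a
  assumes x_in_D: "x \<in> D" and y_notin_D: "y \<notin> D"
    and u_notin_D: "u \<notin> D" and u_ne_y: "u \<noteq> y"
begin

abbreviation D' :: "'a set" where
  "D' \<equiv> insert y (D - {x})"

lemma u_ne_x: "u \<noteq> x"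
  using u_notin_D x_in_D by blast

lemma dpath_swap_prefix:
  assumes g: "gpath T Q" and h: "hd Q = u" and int: "set (butlast (tl Q)) \<inter> D = {}"
    and n: "0 < n" and l: "last (take n Q) = y" and x: "x \<notin> set (take n Q)"
  shows "dpath Tx D' u y (take n Q)"
proof -
  have "gpath Tx (take n Q)"
    using gpath_take[OF g n] x by (simp add: gpath_delete_vertex)
  moreover have "{hd (take n Q), last (take n Q)} \<inter> D' = {y}"
    using h n l u_notin_D u_ne_y by auto
  then have "card ({hd (take n Q), last (take n Q)} \<inter> D') = 1"
    by simp
  moreover have "y \<notin> set (butlast (tl (take n Q)))"
    using last_notin_butlast_tl[of "take n Q"] g l by (simp add: gpath_def)
  then have "set (butlast (tl (take n Q))) \<inter> D' = {}"
    using int set_butlast_tl_take[of n Q] by auto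
  ultimately show ?thesis
    unfolding dpath_def using h n l by simp
qed

lemma dpath_take_to_y:
  assumes Q: "dpath T D u v Q" and v: "v \<noteq> x" and i: "i < length Q" "Q ! i = y"
  shows "dpath Tx D' u y (take (Suc i) Q)" "0 < i" "i < length Q - 1"
proof -
  have g: "gpath T Q" and h: "hd Q = u" and l: "last Q = v"
    and int: "set (butlast (tl Q)) \<inter> D = {}"
    using Q by (auto simp: dpath_def)
  have "Q \<noteq> []"
    using g by (simp add: gpath_def)
  then have "Q ! 0 = u" "Q ! (length Q - 1) \<in> D"
    using h l dpath_last_in[OF Q u_notin_D] by (simp_all add: hd_conv_nth last_conv_nth)
  then have "i \<noteq> 0" "i \<noteq> length Q - 1"
    using i(2) u_ne_y y_notin_D by (cases "i = 0", simp_all, cases "i = length Q - 1", simp_all)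
  then show "0 < i" "i < length Q - 1"
    using i(1) by linarith+
  have "x \<notin> set Q"
    using x_notin_gpath g h l u_ne_x v by blast
  then have "x \<notin> set (take (Suc i) Q)"
    by (auto dest: in_set_takeD)
  moreover have "last (take (Suc i) Q) = y"
    using i by (simp add: take_Suc_conv_app_nth)
  ultimately show "dpath Tx D' u y (take (Suc i) Q)"
    using dpath_swap_prefix[OF g h int] by simp
qed

lemma dpath_butlast_to_y:
  assumes R: "dpath T D u x R"
  shows "dpath Tx D' u y (butlast R)"
proof -
  have g: "gpath T R" and h: "hd R = u" and l: "last R = x"
    and int: "set (butlast (tl R)) \<inter> D = {}"
    using R by (auto simp: dpath_def)
  have ne: "R \<noteq> []"
    using g by (simp add: gpath_def)
  have l2: "2 \<le> length R" and ry: "R ! (length R - 2) = y"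
    using gpath_to_leaf[OF g l] h u_ne_x by auto
  have "butlast R @ [x] = R"
    using l append_butlast_last_id[OF ne] by simp
  then have "distinct (butlast R @ [x])"
    using g by (simp add: gpath_def)
  then have "x \<notin> set (take (length R - 1) R)"
    by (simp add: butlast_conv_take)
  moreover have "take (length R - 1) R \<noteq> []"
    using l2 ne by simp
  then have "last (take (length R - 1) R) = y"
    using ry l2 by (simp add: last_conv_nth numeral_2_eq_2)
  ultimately show ?thesis
    using dpath_swap_prefix[OF g h int, of "length R - 1"] l2 by (simp add: butlast_conv_take)
qed

lemma branch_beyond_y:
  assumes P: "dpath Tx D' u y P" and Q: "dpath T D u v Q" "y \<in> set Q" and v: "v \<noteq> x"
  defines "R \<equiv> drop (length P - 1) Q"
  shows "dcontrib T D u v = (1/2) ^ (length P - 1) * branch_weight R"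
    and "R \<in> dbranches T D (card (verts T)) y (Q ! length P)"
    and "Q ! length P \<in> {c. (y, c) \<in> edges T} - {x, P ! (length P - 2)}"
    and "last R = v"
proof -
  obtain i where i: "i < length Q" "Q ! i = y"
    using Q(2) by (auto simp: in_set_conv_nth)
  note prefix = dpath_take_to_y[OF Q(1) v i]
  have "take (Suc i) Q = P"
    using acyclic_gpath_unique[OF sym_Tx acyclic_Tx] prefix(1) P by (simp add: dpath_def)
  then have P_len: "length P = Suc i" and P_nth: "P ! (length P - 2) = Q ! (i - 1)"
    using i prefix(2) by auto
  have g: "gpath T Q" and l: "last Q = v" and "x \<notin> set Q"
    using Q(1) x_notin_gpath u_ne_x v by (auto simp: dpath_def)
  have R: "R = drop i Q"
    unfolding R_def P_len by simp
  have "dcontrib T D u v = (1/2) ^ (length Q - 2)"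
    using dcontrib_dpath[OF sym acyclic Q(1)] prefix(2,3) by simp
  also have "\<dots> = (1/2) ^ i * (1/2) ^ (length Q - i - 2)"
    using prefix(3) by (simp flip: power_add)
  finally show "dcontrib T D u v = (1/2) ^ (length P - 1) * branch_weight R"
    unfolding R branch_weight_def P_len by simp
  show "R \<in> dbranches T D (card (verts T)) y (Q ! length P)"
    using drop_dpath_mem_dbranches[OF Q(1) u_notin_D prefix(2,3)
        gpath_length_le_card[OF g finite_verts]]
    unfolding R P_len i(2) .
  have "(y, Q ! Suc i) \<in> edges T" "Q ! Suc i \<noteq> x"
    using g prefix(3) i \<open>x \<notin> set Q\<close> by (auto simp: gpath_def)
  moreover have "Q ! Suc i \<noteq> Q ! (i - 1)"
    using g prefix(2,3) by (simp add: gpath_def nth_eq_iff_index_eq)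
  ultimately show "Q ! length P \<in> {c. (y, c) \<in> edges T} - {x, P ! (length P - 2)}"
    unfolding P_len P_nth[unfolded P_len] by simp
  show "last R = v"
    unfolding R using i l by simp
qed

lemma card_other_neighbours_le_1:
  assumes P: "dpath Tx D' u y P"
  shows "card ({c. (y, c) \<in> edges T} - {x, P ! (length P - 2)}) \<le> 1"
proof -
  have gP: "gpath T P" "x \<notin> set P" "2 \<le> length P"
    using P u_ne_y gpath_length_ge_2 by (auto simp: dpath_def gpath_delete_vertex)
  then have "(y, P ! (length P - 2)) \<in> edges T" "P ! (length P - 2) \<noteq> x"
    using gpath_last_edge[OF gP(1,3)] P sym by (auto simp: dpath_def sym_def)
  then have "{x, P ! (length P - 2)} \<subseteq> {c. (y, c) \<in> edges T}" "card {x, P ! (length P - 2)} = 2"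
    using leaf_edge(2) by auto
  then show ?thesis
    using card_neighbours_Diff_le[OF wf subcubic leaf_edge(3), of "{x, P ! (length P - 2)}"]
    by linarith
qed

definition through_y :: "'a set" where
  "through_y = {v \<in> D - {x}. \<exists>Q. dpath T D u v Q \<and> y \<in> set Q}"

lemma sum_dcontrib_through_y_le:
  assumes P: "dpath Tx D' u y P"
  shows "(\<Sum>v\<in>through_y. dcontrib T D u v) \<le> (1/2) ^ (length P - 1)"
proof -
  define Q where "Q v = (SOME Q. dpath T D u v Q \<and> y \<in> set Q)" for v
  define R where "R v = drop (length P - 1) (Q v)" for v
  define a where "a = P ! (length P - 2)"
  define N where "N = {c. (y, c) \<in> edges T} - {x, a}"
  have Q: "dpath T D u v (Q v)" "y \<in> set (Q v)" "v \<noteq> x" if "v \<in> through_y" for v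
    using that someI_ex[of "\<lambda>Q. dpath T D u v Q \<and> y \<in> set Q"]
    unfolding through_y_def Q_def by auto
  have branch: "dcontrib T D u v = (1/2) ^ (length P - 1) * branch_weight (R v)"
    "R v \<in> dbranches T D (card (verts T)) y (Q v ! length P)" "Q v ! length P \<in> N" "last (R v) = v"
    if "v \<in> through_y" for v
    using branch_beyond_y[OF P Q[OF that]] unfolding R_def a_def N_def by simp_all
  have "(\<Sum>v\<in>through_y. branch_weight (R v)) \<le> card N"
  proof (rule sum_inj_into_Union_le_card[where f = R and g = branch_weight
      and B = "dbranches T D (card (verts T)) y"])
    show "inj_on R through_y"
      using branch(4) by (metis inj_onI)
    show "\<exists>c\<in>N. R v \<in> dbranches T D (card (verts T)) y c" if "v \<in> through_y" for v
      using branch(2,3)[OF that] by blast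
    show "(\<Sum>S\<in>dbranches T D (card (verts T)) y c. branch_weight S) \<le> 1" if "c \<in> N" for c
      using dbranches_kraft[OF wf subcubic] that sym by (simp add: N_def sym_def)
  qed (simp_all add: N_def finite_neighbours[OF wf] finite_dbranches[OF finite_verts]
      dbranches_disjoint branch_weight_def)
  moreover have "real (card N) \<le> 1"
    using card_other_neighbours_le_1[OF P] unfolding N_def a_def by simp
  ultimately have "(1/2) ^ (length P - 1) * (\<Sum>v\<in>through_y. branch_weight (R v))
      \<le> (1/2) ^ (length P - 1)"
    by (simp add: mult_left_le)
  then show ?thesis
    using branch(1) by (simp add: sum_distrib_left)
qed

lemma dcontrib_through_y_le:
  "dcontrib T D u x + (\<Sum>v\<in>through_y. dcontrib T D u v) \<le> dcontrib Tx D' u y"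
proof (cases "\<exists>P. dpath Tx D' u y P")
  case True
  then obtain P where P: "dpath Tx D' u y P"
    by blast
  then have l2: "2 \<le> length P"
    using u_ne_y gpath_length_ge_2 by (auto simp: dpath_def)
  moreover have "length P - 1 = Suc (length P - 2)"
    using l2 by simp
  ultimately have "dcontrib Tx D' u y = 2 * (1/2) ^ (length P - 1)"
    using dcontrib_dpath[OF sym_Tx acyclic_Tx P] by simp
  moreover have "dcontrib T D u x \<le> (1/2) ^ (length P - 1)"
  proof (cases "\<exists>R. dpath T D u x R")
    case True
    then obtain R where R: "dpath T D u x R"
      by blast
    then have "butlast R = P"
      using acyclic_gpath_unique[OF sym_Tx acyclic_Tx, of "butlast R" P] dpath_butlast_to_y[OF R] P
      by (simp add: dpath_def)
    then have "length R = Suc (length P)"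
      using R by (cases R rule: rev_cases) (auto simp: dpath_def gpath_def)
    then show ?thesis
      using dcontrib_dpath[OF sym acyclic R] l2 by simp
  qed (simp add: dcontrib_eq_0)
  ultimately show ?thesis
    using sum_dcontrib_through_y_le[OF P] by linarith
next
  case False
  then have "dcontrib T D u x = 0"
    by (intro dcontrib_eq_0) (use dpath_butlast_to_y in blast)
  moreover have "through_y = {}"
  proof -
    have "\<not> (dpath T D u v Q \<and> y \<in> set Q)" if "v \<noteq> x" for v Q
      using False dpath_take_to_y[of v Q] that by (auto simp: in_set_conv_nth)
    then show ?thesis
      unfolding through_y_def by blast
  qed
  ultimately show ?thesis
    by (simp add: dcontrib_nonneg)
qed

lemma dcontrib_avoiding_y_le:
  assumes v: "v \<in> D - {x} - through_y"
  shows "dcontrib T D u v \<le> dcontrib Tx D' u v"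
proof (cases "\<exists>Q. dpath T D u v Q")
  case True
  then obtain Q where Q: "dpath T D u v Q"
    by blast
  then have g: "gpath T Q" and h: "hd Q = u" and l: "last Q = v"
    and int: "set (butlast (tl Q)) \<inter> D = {}" and "y \<notin> set Q"
    using v by (auto simp: dpath_def through_y_def)
  moreover have "x \<notin> set Q"
    using x_notin_gpath g h l u_ne_x v by blast
  moreover have "{hd Q, last Q} \<inter> D' = {v}"
    using h l v u_notin_D u_ne_y by auto
  ultimately have Q': "dpath Tx D' u v Q"
    unfolding dpath_def using set_butlast_tl_subset[of Q] by (auto simp: gpath_delete_vertex)
  have "dcontrib Tx D' u v = dcontrib T D u v"
    unfolding dcontrib_def ddist_dpath[OF sym acyclic Q] ddist_dpath[OF sym_Tx acyclic_Tx Q'] ..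
  then show ?thesis
    by simp
qed (simp add: dcontrib_eq_0 dcontrib_nonneg)

lemma dweight_swap_ge:
  assumes "finite D"
  shows "dweight T D u \<le> dweight Tx D' u"
proof -
  have "through_y \<subseteq> D - {x}"
    by (auto simp: through_y_def)
  then have "(\<Sum>v\<in>D - {x}. dcontrib T D u v)
      = (\<Sum>v\<in>D - {x} - through_y. dcontrib T D u v) + (\<Sum>v\<in>through_y. dcontrib T D u v)"
    using assms by (intro sum.subset_diff) simp_all
  then have "dweight T D u
      = dcontrib T D u x + (\<Sum>v\<in>through_y. dcontrib T D u v)
        + (\<Sum>v\<in>D - {x} - through_y. dcontrib T D u v)"
    unfolding dweight_eq_sum_dcontrib sum.remove[OF assms x_in_D] by simp
  also have "\<dots> \<le> dcontrib Tx D' u y + (\<Sum>v\<in>D - {x} - through_y. dcontrib Tx D' u v)"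
    using dcontrib_through_y_le dcontrib_avoiding_y_le by (intro add_mono sum_mono)
  also have "\<dots> \<le> dcontrib Tx D' u y + (\<Sum>v\<in>D - {x}. dcontrib Tx D' u v)"
    using assms by (intro add_left_mono sum_mono2) (auto simp: dcontrib_nonneg)
  also have "\<dots> = dweight Tx D' u"
    unfolding dweight_eq_sum_dcontrib using assms y_notin_D by simp
  finally show ?thesis .
qed

end

context subcubic_tree_leaf
begin

lemma exp_dominating_swap:
  assumes D: "exp_dominating T D" and "x \<in> D" "y \<notin> D"
  shows "exp_dominating Tx (insert y (D - {x}))"
proof -
  have DV: "D \<subseteq> verts T" and finD: "finite D"
    using D finite_exp_dominating[OF finite_verts D] by (simp_all add: exp_dominating_def)
  have "1 \<le> dweight Tx (insert y (D - {x})) u" if u: "u \<in> verts T" "u \<noteq> x" for u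
  proof (cases "u \<in> insert y (D - {x})")
    case True
    then show ?thesis
      using dweight_ge_2[of "insert y (D - {x})" u Tx] finD u by simp
  next
    case False
    interpret leaf_swap T x y D u
      by (intro leaf_swap.intro subcubic_tree_leaf_axioms leaf_swap_axioms.intro)
        (use assms(2,3) u False in auto)
    have "1 \<le> dweight T D u"
      using D u(1) by (simp add: exp_dominating_def)
    then show ?thesis
      using dweight_swap_ge[OF finD] by linarith
  qed
  then show ?thesis
    using DV leaf_edge(3,4) by (auto simp: exp_dominating_def)
qed

lemma gamma_e_delete_leaf_le: "gamma_e Tx \<le> gamma_e T"
proof -
  obtain D where D: "exp_dominating T D" "card D = gamma_e T"
    using obtain_min_exp_dominating[OF finite_verts] .
  then have finD: "finite D"
    using finite_exp_dominating[OF finite_verts] by blast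
  obtain D' where "exp_dominating Tx D'" "card D' \<le> card D"
  proof (cases "x \<in> D \<and> y \<notin> D")
    case True
    then have "card (insert y (D - {x})) = card D"
      using finD card_insert_disjoint[of "D - {x}" y] card_Suc_Diff1[OF finD conjunct1[OF True]]
      by simp
    then show ?thesis
      using that exp_dominating_swap[OF D(1)] True by simp
  next
    case False
    then show ?thesis
      using that exp_dominating_delete_leaf[OF D(1)] card_Diff1_le[of D x] by blast
  qed
  then show ?thesis
    using gamma_e_le_card[of Tx D'] finite_verts D(2) by simp
qed

end

theorem lemma2:
  fixes T T' :: "'a graph"
  assumes "is_tree T" and "subcubic T" and "subtree T' T"
  shows "gamma_e T' \<le> gamma_e T"
  using assms
proof (induction "card (verts T - verts T')" arbitrary: T)
  case 0
  then have "verts T \<subseteq> verts T'"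
    by (simp add: is_tree_def wf_graph_def)
  then have "T' = T"
    using subtree_spanning_eq "0.prems"(1,3) by blast
  then show ?case
    by simp
next
  case (Suc n)
  have "card (verts T - verts T') \<noteq> 0"
    using Suc.hyps(2) by simp
  then have "\<not> verts T \<subseteq> verts T'"
    by (metis Diff_eq_empty_iff card.empty)
  then obtain x y where x: "x \<in> verts T - verts T'" and leaf: "\<And>w. (x, w) \<in> edges T \<longleftrightarrow> w = y"
    using exists_leaf_outside_subtree[OF Suc.prems(1,3)] by blast
  interpret subcubic_tree_leaf T x y
    using Suc.prems(1,2) leaf by unfold_locales
  have "card (verts Tx - verts T') = n"
    using Suc.hyps(2) x finite_verts by (simp add: Diff_insert2[symmetric] insert_Diff_if)
  then have "gamma_e T' \<le> gamma_e Tx"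
    using Suc.hyps(1) tree_Tx subcubic_delete_vertex[OF wf subcubic]
      subtree_delete_vertex[OF Suc.prems(3)] x by blast
  also have "\<dots> \<le> gamma_e T"
    by (rule gamma_e_delete_leaf_le)
  finally show ?case .
qed

end
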